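(* Let $G_i=(V_i,E_i)$ be a simple graph of maximum degree $\Delta_i$, $i\in\{1,2\}$, and let $S\subseteq V_1\times V_2$. Then: (i) If, for some $i\in\{1,2\}$ and integer $k_i$, $P_{V_i}(S)$ is a $k_i$-daf set in $G_i$, then $S$ is a $(k_i+\Delta_j)$-daf set in $G_1\times G_2$, where $j\in\{1,2\}$, $j\neq i$. (ii) If, for integers $k_1,k_2$, $P_{V_1}(S)$ is a $k_1$-daf set in $G_1$ and $P_{V_2}(S)$ is a $k_2$-daf set in $G_2$, then $S$ is a $(k_1+k_2-1)$-daf set in $G_1\times G_2$.
   Context: All graphs are finite and simple. For a graph $G=(V,E)$, a set $S\subseteq V$ and $v\in V$, let $\delta_S(v)=|\{u\in S: uv\in E\}|$, $\delta(v)$ the degree of $v$, and $\overline{S}=V\setminus S$. For an integer $k$, a non-empty set $S\subseteq V$ is a defensive $k$-alliance if $\delta_S(v)\ge \delta_{\overline S}(v)+k$ for every $v\in S$. A set $X\subseteq V$ is a defensive $k$-alliance free set ($k$-daf set) if no defensive $k$-alliance $S$ satisfies $S\subseteq X$. The Cartesian product $G_1\times G_2$ of $G_1=(V_1,E_1)$, $G_2=(V_2,E_2)$ has vertex set $V_1\times V_2$, with $(a,b)$ adjacent to $(c,d)$ iff either $a=c$ and $bd\in E_2$, or $b=d$ and $ac\in E_1$. For $A\subseteq V_1\times V_2$, $P_{V_i}(A)$ denotes the projection of $A$ onto $V_i$. *)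

theory Defs
  imports Main
begin

definition simple_graph :: "'a set \<Rightarrow> ('a \<Rightarrow> 'a \<Rightarrow> bool) \<Rightarrow> bool" where
  "simple_graph V E \<longleftrightarrow> finite V \<and> (\<forall>u v. E u v \<longrightarrow> u \<in> V \<and> v \<in> V)
     \<and> (\<forall>u v. E u v \<longrightarrow> E v u) \<and> (\<forall>v. \<not> E v v)"

definition delta_in :: "('a \<Rightarrow> 'a \<Rightarrow> bool) \<Rightarrow> 'a set \<Rightarrow> 'a \<Rightarrow> nat" where
  "delta_in E S v = card {u \<in> S. E u v}"

definition degree :: "'a set \<Rightarrow> ('a \<Rightarrow> 'a \<Rightarrow> bool) \<Rightarrow> 'a \<Rightarrow> nat" where
  "degree V E v = delta_in E V v"

definition max_degree :: "'a set \<Rightarrow> ('a \<Rightarrow> 'a \<Rightarrow> bool) \<Rightarrow> nat" where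
  "max_degree V E = Max (insert 0 (degree V E ` V))"

definition defensive_alliance :: "'a set \<Rightarrow> ('a \<Rightarrow> 'a \<Rightarrow> bool) \<Rightarrow> int \<Rightarrow> 'a set \<Rightarrow> bool" where
  "defensive_alliance V E k S \<longleftrightarrow> S \<noteq> {} \<and> S \<subseteq> V \<and>
     (\<forall>v\<in>S. int (delta_in E S v) \<ge> int (delta_in E (V - S) v) + k)"

definition daf_set :: "'a set \<Rightarrow> ('a \<Rightarrow> 'a \<Rightarrow> bool) \<Rightarrow> int \<Rightarrow> 'a set \<Rightarrow> bool" where
  "daf_set V E k X \<longleftrightarrow> X \<subseteq> V \<and> \<not> (\<exists>S. S \<subseteq> X \<and> defensive_alliance V E k S)"

definition cart_edges :: "('a \<Rightarrow> 'a \<Rightarrow> bool) \<Rightarrow> ('b \<Rightarrow> 'b \<Rightarrow> bool) \<Rightarrow> ('a \<times> 'b) \<Rightarrow> ('a \<times> 'b) \<Rightarrow> bool" where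
  "cart_edges E1 E2 x y \<longleftrightarrow> (fst x = fst y \<and> E2 (snd x) (snd y)) \<or> (snd x = snd y \<and> E1 (fst x) (fst y))"

end

theory Submission
  imports Defs
begin

(* For A \<subseteq> V1 \<times> V2 write row A b = {x. (x,b) \<in> A} and column A a = {y. (a,y) \<in> A}.
   The neighbours of (a,b) in the product split into the neighbours of a in its row
   and of b in its column, so delta_A(a,b) = delta_{row}(a) + delta_{column}(b), and the
   same holds for the complement of A.  From this:
   - if A is a defensive (k + Delta_1)-alliance of G1 \<times> G2, then every nonempty column
     of A is a defensive k-alliance of G2, since the row contributes at most Delta_1;
   - if A is a defensive (k1 + k2 - 1)-alliance and some a \<in> fst ` A violates the
     k1-alliance condition for fst ` A in G1, then the column of A at a is a defensive
     k2-alliance of G2.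
   Since columns of A \<subseteq> S lie in snd ` S, this yields part (ii) and part (iii) of the
   theorem.  Part (i) follows from part (ii) because daf sets are preserved by graph
   isomorphisms, in particular by the coordinate swap G1 \<times> G2 \<cong> G2 \<times> G1. *)

lemma simple_graph_finite_nbhd: "simple_graph V E \<Longrightarrow> finite {u \<in> T. E u v}"
  unfolding simple_graph_def by (metis (no_types, lifting) finite_subset mem_Collect_eq subsetI)

lemma delta_in_mono:
  "simple_graph V E \<Longrightarrow> T \<subseteq> T' \<Longrightarrow> delta_in E T v \<le> delta_in E T' v"
  unfolding delta_in_def by (rule card_mono[OF simple_graph_finite_nbhd]) auto

lemma delta_in_compl_sum:
  assumes "simple_graph V E" "C \<subseteq> V"
  shows "delta_in E C v + delta_in E (V - C) v = degree V E v"
proof -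
  have "{u \<in> V. E u v} = {u \<in> C. E u v} \<union> {u \<in> V - C. E u v}" using assms(2) by auto
  moreover have "card ({u \<in> C. E u v} \<union> {u \<in> V - C. E u v})
                   = card {u \<in> C. E u v} + card {u \<in> V - C. E u v}"
    using simple_graph_finite_nbhd[OF assms(1)] by (intro card_Un_disjoint) blast+
  ultimately show ?thesis unfolding degree_def delta_in_def by simp
qed

lemma degree_le_max_degree:
  assumes "simple_graph V E" "v \<in> V"
  shows "degree V E v \<le> max_degree V E"
  using assms unfolding max_degree_def simple_graph_def by (intro Max_ge) auto

lemma delta_in_compl_le_max_degree:
  assumes "simple_graph V E" "C \<subseteq> V" "v \<in> V"
  shows "delta_in E C v + delta_in E (V - C) v \<le> max_degree V E"
  using delta_in_compl_sum[OF assms(1,2)] degree_le_max_degree[OF assms(1,3)] by simp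

lemma daf_set_no_alliance:
  "daf_set V E k X \<Longrightarrow> T \<subseteq> X \<Longrightarrow> \<not> defensive_alliance V E k T"
  unfolding daf_set_def by blast

lemma delta_in_iso:
  assumes "inj f" and "\<And>u w. E' (f u) (f w) = E u w"
  shows "delta_in E' (f ` T) (f v) = delta_in E T v"
proof -
  have "{u' \<in> f ` T. E' u' (f v)} = f ` {u \<in> T. E u v}" using assms(2) by auto
  then show ?thesis
    unfolding delta_in_def using assms(1) by (simp add: card_image inj_on_subset)
qed

lemma defensive_alliance_iso:
  assumes "inj f" and "\<And>u w. E' (f u) (f w) = E u w"
  shows "defensive_alliance (f ` V) E' k (f ` A) = defensive_alliance V E k A"
proof -
  have "f ` V - f ` A = f ` (V - A)" using assms(1) by (simp add: image_set_diff)
  then show ?thesis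
    unfolding defensive_alliance_def
    using delta_in_iso[of f E' E, OF assms] inj_image_subset_iff[OF assms(1)] by auto
qed

lemma daf_set_iso:
  assumes "bij f" and "\<And>u w. E' (f u) (f w) = E u w" and "daf_set V E k X"
  shows "daf_set (f ` V) E' k (f ` X)"
  unfolding daf_set_def
proof (intro conjI notI)
  have inj: "inj f" using assms(1) bij_is_inj by blast
  show "f ` X \<subseteq> f ` V" using assms(3) unfolding daf_set_def by blast
  assume "\<exists>S'. S' \<subseteq> f ` X \<and> defensive_alliance (f ` V) E' k S'"
  then obtain S' where S': "S' \<subseteq> f ` X" "defensive_alliance (f ` V) E' k S'" by blast
  have image: "f ` (f -` S') = S'" using assms(1) by (simp add: bij_is_surj surj_image_vimage_eq)
  have "f -` S' \<subseteq> X" using S'(1) inj by (auto dest: injD)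
  moreover have "defensive_alliance V E k (f -` S')"
    using S'(2) defensive_alliance_iso[of f E' E, OF inj assms(2)] image by metis
  ultimately show False using daf_set_no_alliance[OF assms(3)] by blast
qed

lemma cart_edges_swap:
  "cart_edges E2 E1 (prod.swap x) (prod.swap y) = cart_edges E1 E2 x y"
  unfolding cart_edges_def by auto

definition row :: "('a \<times> 'b) set \<Rightarrow> 'b \<Rightarrow> 'a set" where
  "row A b = {x. (x, b) \<in> A}"

definition column :: "('a \<times> 'b) set \<Rightarrow> 'a \<Rightarrow> 'b set" where
  "column A a = {y. (a, y) \<in> A}"

text \<open>Neighbours of (a,b) in B split into row neighbours and column neighbours; the two
  parts are disjoint because E1 is irreflexive.\<close>
lemma cart_delta_in:
  assumes g1: "simple_graph V1 E1" and g2: "simple_graph V2 E2"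
  shows "delta_in (cart_edges E1 E2) B (a, b)
           = delta_in E1 (row B b) a + delta_in E2 (column B a) b"
proof -
  let ?P = "{x \<in> row B b. E1 x a}" and ?Q = "{y \<in> column B a. E2 y b}"
  have nbhd: "{u \<in> B. cart_edges E1 E2 u (a, b)} = (\<lambda>x. (x, b)) ` ?P \<union> (\<lambda>y. (a, y)) ` ?Q"
    unfolding cart_edges_def row_def column_def by force
  have "\<not> E1 a a" using g1 unfolding simple_graph_def by auto
  then have "card ((\<lambda>x. (x, b)) ` ?P \<union> (\<lambda>y. (a, y)) ` ?Q)
               = card ((\<lambda>x. (x, b)) ` ?P) + card ((\<lambda>y. (a, y)) ` ?Q)"
    using simple_graph_finite_nbhd[OF g1] simple_graph_finite_nbhd[OF g2]
    by (intro card_Un_disjoint) auto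
  also have "\<dots> = card ?P + card ?Q"
    by (simp add: card_image inj_on_def)
  finally show ?thesis unfolding delta_in_def nbhd .
qed

lemma cart_delta_in_compl:
  assumes "simple_graph V1 E1" "simple_graph V2 E2" "a \<in> V1" "b \<in> V2"
  shows "delta_in (cart_edges E1 E2) (V1 \<times> V2 - A) (a, b)
           = delta_in E1 (V1 - row A b) a + delta_in E2 (V2 - column A a) b"
proof -
  have "row (V1 \<times> V2 - A) b = V1 - row A b" "column (V1 \<times> V2 - A) a = V2 - column A a"
    using assms(3,4) unfolding row_def column_def by auto
  then show ?thesis using cart_delta_in[OF assms(1,2)] by simp
qed

lemma cart_alliance_at:
  assumes "simple_graph V1 E1" "simple_graph V2 E2"
    and "defensive_alliance (V1 \<times> V2) (cart_edges E1 E2) k A" "(a, b) \<in> A"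
  shows "int (delta_in E1 (row A b) a) + int (delta_in E2 (column A a) b)
           \<ge> int (delta_in E1 (V1 - row A b) a) + int (delta_in E2 (V2 - column A a) b) + k"
proof -
  have "a \<in> V1" "b \<in> V2" using assms(3,4) unfolding defensive_alliance_def by auto
  then show ?thesis
    using assms(3,4) cart_delta_in[OF assms(1,2)] cart_delta_in_compl[OF assms(1,2)]
    unfolding defensive_alliance_def by fastforce
qed

lemma column_subset_snd: "A \<subseteq> S \<Longrightarrow> column A a \<subseteq> snd ` S"
  unfolding column_def by force

text \<open>Every nonempty column of a defensive (k + Delta_1)-alliance of G1 \<times> G2 is a
  defensive k-alliance of G2: the row part of the inequality contributes at most Delta_1.\<close>
lemma column_alliance_max_degree:
  assumes g1: "simple_graph V1 E1" and g2: "simple_graph V2 E2"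
    and al: "defensive_alliance (V1 \<times> V2) (cart_edges E1 E2) (k + int (max_degree V1 E1)) A"
    and "(a, b) \<in> A"
  shows "defensive_alliance V2 E2 k (column A a)"
  unfolding defensive_alliance_def
proof (intro conjI ballI)
  have AV: "A \<subseteq> V1 \<times> V2" using al unfolding defensive_alliance_def by blast
  show "column A a \<noteq> {}" using \<open>(a, b) \<in> A\<close> unfolding column_def by auto
  show "column A a \<subseteq> V2" using AV unfolding column_def by auto
  fix y assume "y \<in> column A a"
  then have ay: "(a, y) \<in> A" unfolding column_def by simp
  have "row A y \<subseteq> V1" "a \<in> V1" using AV ay unfolding row_def by auto
  then have "delta_in E1 (row A y) a + delta_in E1 (V1 - row A y) a \<le> max_degree V1 E1"
    by (rule delta_in_compl_le_max_degree[OF g1])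
  then show "int (delta_in E2 (column A a) y) \<ge> int (delta_in E2 (V2 - column A a) y) + k"
    using cart_alliance_at[OF g1 g2 al ay] by linarith
qed

text \<open>If a \<in> fst ` A violates the k1-alliance condition for fst ` A in G1, then the column
  of a defensive (k1 + k2 - 1)-alliance A at a is a defensive k2-alliance of G2; here the
  row of A at any b is contained in fst ` A.\<close>
lemma column_alliance_at_violator:
  assumes g1: "simple_graph V1 E1" and g2: "simple_graph V2 E2"
    and al: "defensive_alliance (V1 \<times> V2) (cart_edges E1 E2) (k1 + k2 - 1) A"
    and "a \<in> fst ` A"
    and violates: "int (delta_in E1 (fst ` A) a) < int (delta_in E1 (V1 - fst ` A) a) + k1"
  shows "defensive_alliance V2 E2 k2 (column A a)"
  unfolding defensive_alliance_def
proof (intro conjI ballI)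
  have AV: "A \<subseteq> V1 \<times> V2" using al unfolding defensive_alliance_def by blast
  show "column A a \<noteq> {}" using \<open>a \<in> fst ` A\<close> unfolding column_def by force
  show "column A a \<subseteq> V2" using AV unfolding column_def by auto
  fix y assume "y \<in> column A a"
  then have ay: "(a, y) \<in> A" unfolding column_def by simp
  have "delta_in E1 (row A y) a \<le> delta_in E1 (fst ` A) a"
    by (rule delta_in_mono[OF g1]) (force simp: row_def)
  moreover have "delta_in E1 (V1 - fst ` A) a \<le> delta_in E1 (V1 - row A y) a"
    by (rule delta_in_mono[OF g1]) (force simp: row_def)
  ultimately show "int (delta_in E2 (column A a) y) \<ge> int (delta_in E2 (V2 - column A a) y) + k2"
    using cart_alliance_at[OF g1 g2 al ay] violates by linarith
qed

lemma daf_product_snd: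
  assumes g1: "simple_graph V1 E1" and g2: "simple_graph V2 E2"
    and SV: "S \<subseteq> V1 \<times> V2" and daf: "daf_set V2 E2 k (snd ` S)"
  shows "daf_set (V1 \<times> V2) (cart_edges E1 E2) (k + int (max_degree V1 E1)) S"
  unfolding daf_set_def
proof (intro conjI notI)
  show "S \<subseteq> V1 \<times> V2" by (rule SV)
  assume "\<exists>A. A \<subseteq> S \<and> defensive_alliance (V1 \<times> V2) (cart_edges E1 E2) (k + int (max_degree V1 E1)) A"
  then obtain A where A: "A \<subseteq> S"
      and al: "defensive_alliance (V1 \<times> V2) (cart_edges E1 E2) (k + int (max_degree V1 E1)) A"
    by blast
  obtain a b where "(a, b) \<in> A" using al unfolding defensive_alliance_def by auto
  then have "defensive_alliance V2 E2 k (column A a)"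
    by (rule column_alliance_max_degree[OF g1 g2 al])
  then show False using daf_set_no_alliance[OF daf column_subset_snd[OF A]] by contradiction
qed

text \<open>Part (i), obtained from part (ii) through the swap isomorphism.\<close>
lemma daf_product_fst:
  assumes g1: "simple_graph V1 E1" and g2: "simple_graph V2 E2"
    and SV: "S \<subseteq> V1 \<times> V2" and daf: "daf_set V1 E1 k (fst ` S)"
  shows "daf_set (V1 \<times> V2) (cart_edges E1 E2) (k + int (max_degree V2 E2)) S"
proof -
  have swapS: "prod.swap ` S \<subseteq> V2 \<times> V1" using SV by auto
  have "snd ` prod.swap ` S = fst ` S" by (simp add: image_image)
  then have "daf_set (V2 \<times> V1) (cart_edges E2 E1) (k + int (max_degree V2 E2)) (prod.swap ` S)"
    using daf_product_snd[OF g2 g1 swapS] daf by simp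
  then have "daf_set (prod.swap ` (V2 \<times> V1)) (cart_edges E1 E2) (k + int (max_degree V2 E2))
               (prod.swap ` prod.swap ` S)"
    using daf_set_iso[where f = prod.swap and E' = "cart_edges E1 E2" and E = "cart_edges E2 E1"]
    by (simp add: cart_edges_swap)
  then show ?thesis by (simp add: image_image product_swap)
qed

text \<open>A product
  alliance inside S has a non-alliance first projection, and the column at a violating
  vertex is an alliance inside snd ` S.\<close>
lemma daf_product_both:
  assumes g1: "simple_graph V1 E1" and g2: "simple_graph V2 E2" and SV: "S \<subseteq> V1 \<times> V2"
    and daf1: "daf_set V1 E1 k1 (fst ` S)" and daf2: "daf_set V2 E2 k2 (snd ` S)"
  shows "daf_set (V1 \<times> V2) (cart_edges E1 E2) (k1 + k2 - 1) S"
  unfolding daf_set_def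
proof (intro conjI notI)
  show "S \<subseteq> V1 \<times> V2" by (rule SV)
  assume "\<exists>A. A \<subseteq> S \<and> defensive_alliance (V1 \<times> V2) (cart_edges E1 E2) (k1 + k2 - 1) A"
  then obtain A where A: "A \<subseteq> S"
      and al: "defensive_alliance (V1 \<times> V2) (cart_edges E1 E2) (k1 + k2 - 1) A"
    by blast
  have "\<not> defensive_alliance V1 E1 k1 (fst ` A)"
    using daf_set_no_alliance[OF daf1 image_mono[OF A]] .
  moreover have "fst ` A \<noteq> {}" "fst ` A \<subseteq> V1"
    using al unfolding defensive_alliance_def by auto
  ultimately obtain a where "a \<in> fst ` A"
      and "int (delta_in E1 (fst ` A) a) < int (delta_in E1 (V1 - fst ` A) a) + k1"
    using defensive_alliance_def not_le by (metis (no_types, lifting))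
  then have "defensive_alliance V2 E2 k2 (column A a)"
    by (rule column_alliance_at_violator[OF g1 g2 al])
  then show False using daf_set_no_alliance[OF daf2 column_subset_snd[OF A]] by contradiction
qed

theorem theorem1:
  fixes V1 :: "'a set" and E1 :: "'a \<Rightarrow> 'a \<Rightarrow> bool"
    and V2 :: "'b set" and E2 :: "'b \<Rightarrow> 'b \<Rightarrow> bool"
    and S :: "('a \<times> 'b) set"
  assumes "simple_graph V1 E1" and "simple_graph V2 E2"
    and "S \<subseteq> V1 \<times> V2"
  shows "(\<forall>k1::int. daf_set V1 E1 k1 (fst ` S) \<longrightarrow>
            daf_set (V1 \<times> V2) (cart_edges E1 E2) (k1 + int (max_degree V2 E2)) S)
       \<and> (\<forall>k2::int. daf_set V2 E2 k2 (snd ` S) \<longrightarrow>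
            daf_set (V1 \<times> V2) (cart_edges E1 E2) (k2 + int (max_degree V1 E1)) S)
       \<and> (\<forall>k1 k2::int. daf_set V1 E1 k1 (fst ` S) \<and> daf_set V2 E2 k2 (snd ` S) \<longrightarrow>
            daf_set (V1 \<times> V2) (cart_edges E1 E2) (k1 + k2 - 1) S)"
proof (intro conjI allI impI)
  show "daf_set (V1 \<times> V2) (cart_edges E1 E2) (k1 + int (max_degree V2 E2)) S"
    if "daf_set V1 E1 k1 (fst ` S)" for k1
    using daf_product_fst[OF assms that] .
  show "daf_set (V1 \<times> V2) (cart_edges E1 E2) (k2 + int (max_degree V1 E1)) S"
    if "daf_set V2 E2 k2 (snd ` S)" for k2
    using daf_product_snd[OF assms that] .
  show "daf_set (V1 \<times> V2) (cart_edges E1 E2) (k1 + k2 - 1) S"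
    if "daf_set V1 E1 k1 (fst ` S) \<and> daf_set V2 E2 k2 (snd ` S)" for k1 k2
    using daf_product_both[OF assms] that by blast
qed

end
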